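(* If $\ell\ge 5$ is not divisible by three, then the uniform Tur\'an density of the tight $3$-uniform cycle $C_\ell^{(3)}$ is at least $4/27$.
   Context: For $\ell\ge 5$, the tight $3$-uniform cycle $C_\ell^{(3)}$ is the $3$-uniform hypergraph with $\ell$ vertices $v_1,\ldots,v_\ell$ whose edges are exactly the triples $\{v_i,v_{i+1},v_{i+2}\}$, $i\in[\ell]$, indices modulo $\ell$. For an $n$-vertex $3$-uniform hypergraph $H$ and $\varepsilon>0$, the $\varepsilon$-linear density of $H$ is the minimum edge density of an induced subhypergraph of $H$ with at least $\varepsilon n$ vertices. The uniform Tur\'an density of a $3$-uniform hypergraph $F$ is the supremum of all $d\in[0,1]$ such that for every $\varepsilon>0$ there exist arbitrarily large $F$-free $3$-uniform hypergraphs with $\varepsilon$-linear density at least $d$. *)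

theory Defs
  imports Complex_Main
begin

definition hypergraph3 :: "'a set \<Rightarrow> 'a set set \<Rightarrow> bool" where
  "hypergraph3 V E \<longleftrightarrow> (\<forall>e\<in>E. e \<subseteq> V \<and> card e = 3)"

definition tight_cycle_edges :: "nat \<Rightarrow> nat set set" where
  "tight_cycle_edges l = {{i, (i+1) mod l, (i+2) mod l} | i. i < l}"

definition contains_copy :: "'b set \<Rightarrow> 'b set set \<Rightarrow> 'a set \<Rightarrow> 'a set set \<Rightarrow> bool" where
  "contains_copy VF EF V E \<longleftrightarrow>
     (\<exists>f. inj_on f VF \<and> f ` VF \<subseteq> V \<and> (\<forall>e\<in>EF. f ` e \<in> E))"

definition free_of :: "'b set \<Rightarrow> 'b set set \<Rightarrow> 'a set \<Rightarrow> 'a set set \<Rightarrow> bool" where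
  "free_of VF EF V E \<longleftrightarrow> \<not> contains_copy VF EF V E"

definition edge_density :: "'a set set \<Rightarrow> 'a set \<Rightarrow> real" where
  "edge_density E S = real (card {e\<in>E. e \<subseteq> S}) / real (card S choose 3)"

text \<open>epsilon-linear density of an n-vertex hypergraph (V,E): minimum edge density of an
  induced subhypergraph on at least eps*n vertices (1 if there is no such set,
  which only happens for eps > 1).\<close>
definition linear_density :: "real \<Rightarrow> 'a set \<Rightarrow> 'a set set \<Rightarrow> real" where
  "linear_density eps V E =
     (let D = {edge_density E S | S. S \<subseteq> V \<and> real (card S) \<ge> eps * real (card V)}
      in if D = {} then 1 else Min D)"

definition uniform_turan_density :: "'b set \<Rightarrow> 'b set set \<Rightarrow> real" where
  "uniform_turan_density VF EF =
     Sup {d. 0 \<le> d \<and> d \<le> 1 \<and>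
        (\<forall>eps>0. \<forall>N. \<exists>n\<ge>N. \<exists>E::nat set set.
            hypergraph3 {..<n} E \<and> free_of VF EF {..<n} E \<and>
            linear_density eps {..<n} E \<ge> d)}"

end

theory Submission
  imports Defs "HOL-Probability.Hoeffding" "HOL-Real_Asymp.Real_Asymp"
begin

(*
  Colour every pair i < j of {..<n} red independently with probability 1/3 and let the edges
  be the triples i < j < k with ij red and jk, ik not red.  In each edge the red pair consists
  of the two smallest vertices.  Hence along a tight cycle v_0, ..., v_(l-1) the position of
  the largest vertex inside the window v_t, v_(t+1), v_(t+2) decreases by one modulo 3 at every
  step, and returning to the start forces 3 dvd l.

  By Hoeffding's inequality and a union bound over the 4^n pairs of vertex sets, some colouring
  has, between any two vertex sets X and Y, a number of red pairs x < y that is a third of all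
  such pairs up to o(n^2).  Writing the edge indicator as 4/27 plus error terms, each of which
  is a sum of such deviations, every vertex set of linear size then spans edge density at least
  1/3 (2/3)^2 - o(1) = 4/27 - o(1).
*)

definition pair_deviation :: "real \<Rightarrow> ('a::linorder \<Rightarrow> 'a \<Rightarrow> bool) \<Rightarrow> 'a set \<Rightarrow> 'a set \<Rightarrow> real" where
  "pair_deviation p red X Y = (\<Sum>x\<in>X. \<Sum>y\<in>Y. of_bool (x < y) * (of_bool (red x y) - p))"

lemma pair_deviation_eq_card:
  assumes "finite X" "finite Y"
  shows "pair_deviation p red X Y
         = real (card {(x, y) \<in> X \<times> Y. x < y \<and> red x y}) - real (card {(x, y) \<in> X \<times> Y. x < y}) * p"
proof -
  have "pair_deviation p red X Y
      = (\<Sum>q\<in>X \<times> Y. of_bool (case q of (x, y) \<Rightarrow> x < y \<and> red x y))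
        - (\<Sum>q\<in>X \<times> Y. of_bool (case q of (x, y) \<Rightarrow> x < y)) * p"
    unfolding pair_deviation_def sum.cartesian_product sum_distrib_right sum_subtractf[symmetric]
    by (intro sum.cong refl) (auto simp: algebra_simps)
  moreover have "X \<times> Y \<inter> {q. case q of (x, y) \<Rightarrow> x < y \<and> red x y} = {(x, y) \<in> X \<times> Y. x < y \<and> red x y}"
    "X \<times> Y \<inter> {q. case q of (x, y) \<Rightarrow> x < y} = {(x, y) \<in> X \<times> Y. x < y}"
    by auto
  ultimately show ?thesis
    using assms by simp
qed

lemma prob_bernoulli_count_deviation:
  fixes A I :: "'a set" and p \<epsilon> :: real
  assumes A: "finite A" and I: "I \<subseteq> A" "I \<noteq> {}" and p: "p \<in> {0..1}" and \<epsilon>: "\<epsilon> \<ge> 0"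
  shows "measure_pmf.prob (Pi_pmf A False (\<lambda>_. bernoulli_pmf p))
           {f. \<epsilon> \<le> \<bar>real (card {i\<in>I. f i}) - real (card I) * p\<bar>}
         \<le> 2 * exp (-2 * \<epsilon>\<^sup>2 / real (card I))"
proof -
  have "finite I" using A I finite_subset by blast
  have binomial: "binomial_pmf (card I) p =
      map_pmf (\<lambda>f. card {i\<in>I. f i}) (Pi_pmf A False (\<lambda>_. bernoulli_pmf p))"
  proof -
    have "binomial_pmf (card I) p = map_pmf (\<lambda>f. card {i\<in>I. f i}) (Pi_pmf I False (\<lambda>_. bernoulli_pmf p))"
      using \<open>finite I\<close> p by (rule binomial_pmf_altdef'[OF _ refl])
    also have "\<dots> = map_pmf (\<lambda>f. card {i\<in>I. f i}) (Pi_pmf A False (\<lambda>_. bernoulli_pmf p))"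
      unfolding Pi_pmf_subset[OF A I(1)] pmf.map_comp o_def
      by (intro pmf.map_cong refl arg_cong[where f = card]) auto
    finally show ?thesis .
  qed
  interpret binomial_distribution "card I" p by unfold_locales (rule p)
  have "card I > 0" using \<open>finite I\<close> I(2) by (simp add: card_gt_0_iff)
  from prob_abs_ge[OF this \<epsilon>] show ?thesis
    by (simp add: binomial mult.commute)
qed

lemma exists_colouring_with_small_pair_deviations:
  fixes p \<gamma> :: real and n :: nat
  assumes p: "p \<in> {0..1}" and \<gamma>: "0 < \<gamma>" and small: "2 * 4 ^ n * exp (-2 * \<gamma>\<^sup>2 * real n ^ 2) < 1"
  shows "\<exists>red. \<forall>X\<subseteq>{..<n}. \<forall>Y\<subseteq>{..<n}. \<bar>pair_deviation p red X Y\<bar> < \<gamma> * real n ^ 2"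
proof -
  define M where "M = Pi_pmf ({..<n} \<times> {..<n}) False (\<lambda>_. bernoulli_pmf p)"
  define I where "I X Y = {(x, y) \<in> X \<times> Y. x < y}" for X Y :: "nat set"
  define bad where "bad = (\<lambda>(X, Y).
    {\<omega>. \<gamma> * real n ^ 2 \<le> \<bar>real (card {q \<in> I X Y. \<omega> q}) - real (card (I X Y)) * p\<bar>})"
  define C where "C = Pow {..<n} \<times> Pow {..<n}"
  have "0 < n" using small by (cases n) auto
  then have \<epsilon>: "0 < \<gamma> * real n ^ 2" using \<gamma> by simp
  have bad_prob: "measure_pmf.prob M (bad (X, Y)) \<le> 2 * exp (-2 * \<gamma>\<^sup>2 * real n ^ 2)"
    if "X \<subseteq> {..<n}" "Y \<subseteq> {..<n}" for X Y
  proof (cases "I X Y = {}")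
    case True
    then have "bad (X, Y) = {}" using \<epsilon> by (auto simp: bad_def)
    then show ?thesis by simp
  next
    case False
    have sub: "I X Y \<subseteq> {..<n} \<times> {..<n}" using that by (auto simp: I_def)
    then have "real (card (I X Y)) \<le> real n ^ 2"
      using card_mono[OF _ sub] by (simp add: power2_eq_square flip: of_nat_mult)
    moreover have "0 < card (I X Y)"
      using False finite_subset[OF sub] by (simp add: card_gt_0_iff)
    ultimately have "(\<gamma> * real n ^ 2)\<^sup>2 / real n ^ 2 \<le> (\<gamma> * real n ^ 2)\<^sup>2 / real (card (I X Y))"
      using \<open>0 < n\<close> by (intro divide_left_mono) auto
    then have "\<gamma>\<^sup>2 * real n ^ 2 \<le> (\<gamma> * real n ^ 2)\<^sup>2 / real (card (I X Y))"
      using \<open>0 < n\<close> by (simp add: power2_eq_square)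
    then have "2 * exp (-2 * (\<gamma> * real n ^ 2)\<^sup>2 / real (card (I X Y)))
        \<le> 2 * exp (-2 * \<gamma>\<^sup>2 * real n ^ 2)"
      by simp
    moreover have "measure_pmf.prob M (bad (X, Y)) \<le> 2 * exp (-2 * (\<gamma> * real n ^ 2)\<^sup>2 / real (card (I X Y)))"
      unfolding M_def bad_def prod.case by (rule prob_bernoulli_count_deviation) (use sub False p \<epsilon> in auto)
    ultimately show ?thesis by linarith
  qed
  have "measure_pmf.prob M (\<Union>(bad ` C)) \<le> (\<Sum>XY\<in>C. measure_pmf.prob M (bad XY))"
    by (rule measure_UNION_le) (auto simp: C_def)
  also have "\<dots> \<le> real (card C) * (2 * exp (-2 * \<gamma>\<^sup>2 * real n ^ 2))"
    using bad_prob by (intro sum_bounded_above) (auto simp: C_def)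
  also have "\<dots> = 2 * 4 ^ n * exp (-2 * \<gamma>\<^sup>2 * real n ^ 2)"
    by (simp add: C_def card_cartesian_product card_Pow power_mult_distrib[symmetric])
  finally have "measure_pmf.prob M (\<Union>(bad ` C)) < 1"
    using small by linarith
  then have "\<Union>(bad ` C) \<noteq> UNIV"
    by auto
  then obtain \<omega> where \<omega>: "\<omega> \<notin> \<Union>(bad ` C)"
    by blast
  show ?thesis
  proof (intro exI allI impI)
    fix X Y assume "X \<subseteq> {..<n}" "Y \<subseteq> {..<n}"
    with \<omega> have "\<omega> \<notin> bad (X, Y)" by (auto simp: C_def)
    moreover have "{(x, y) \<in> X \<times> Y. x < y \<and> curry \<omega> x y} = {q \<in> I X Y. \<omega> q}"
      by (auto simp: I_def)
    ultimately show "\<bar>pair_deviation p (curry \<omega>) X Y\<bar> < \<gamma> * real n ^ 2"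
      using finite_subset[OF \<open>X \<subseteq> {..<n}\<close>] finite_subset[OF \<open>Y \<subseteq> {..<n}\<close>]
      by (simp add: pair_deviation_eq_card bad_def I_def)
  qed
qed

lemma eventually_exists_colouring_with_small_pair_deviations:
  fixes p \<gamma> :: real
  assumes "p \<in> {0..1}" "0 < \<gamma>"
  shows "\<forall>\<^sub>F n in sequentially.
           \<exists>red. \<forall>X\<subseteq>{..<n}. \<forall>Y\<subseteq>{..<n}. \<bar>pair_deviation p red X Y\<bar> < \<gamma> * real n ^ 2"
proof -
  have "(\<lambda>n. 2 * 4 ^ n * exp (-2 * \<gamma>\<^sup>2 * real n ^ 2)) \<longlonglongrightarrow> 0"
    using \<open>0 < \<gamma>\<close> by real_asymp
  then have "\<forall>\<^sub>F n in sequentially. 2 * 4 ^ n * exp (-2 * \<gamma>\<^sup>2 * real n ^ 2) < 1"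
    by (rule order_tendstoD) simp
  then show ?thesis
    by eventually_elim (rule exists_colouring_with_small_pair_deviations[OF assms])
qed

definition sorted_triple_sum :: "'a::linorder set \<Rightarrow> ('a \<Rightarrow> 'a \<Rightarrow> 'a \<Rightarrow> real) \<Rightarrow> real" where
  "sorted_triple_sum S g = (\<Sum>i\<in>S. \<Sum>j\<in>S. \<Sum>k\<in>S. of_bool (i < j \<and> j < k) * g i j k)"

lemma card_sorted_triples:
  fixes S :: "'a::linorder set"
  assumes "finite S"
  shows "real (card {{i, j, k} | i j k. i \<in> S \<and> j \<in> S \<and> k \<in> S \<and> i < j \<and> j < k \<and> Q i j k})
         = sorted_triple_sum S (\<lambda>i j k. of_bool (Q i j k))"
proof -
  define P where "P = (\<lambda>(i, j, k). i < j \<and> j < k \<and> Q i j k)"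
  define T where "T = {t \<in> S \<times> S \<times> S. P t}"
  have inj: "inj_on (\<lambda>(i, j, k). {i, j, k}) T"
  proof (rule inj_onI)
    fix t t' assume t: "t \<in> T" "t' \<in> T" "(\<lambda>(i, j, k). {i, j, k}) t = (\<lambda>(i, j, k). {i, j, k}) t'"
    obtain i j k i' j' k' where tt: "t = (i, j, k)" "t' = (i', j', k')"
      by (cases t, cases t')
    have "sorted_wrt (<) [i, j, k]" "sorted_wrt (<) [i', j', k']" "set [i', j', k'] = set [i, j, k]"
      using t unfolding tt by (auto simp: T_def P_def)
    then have "[i', j', k'] = [i, j, k]" by (rule strict_sorted_equal)
    then show "t = t'" unfolding tt by simp
  qed
  have "{{i, j, k} | i j k. i \<in> S \<and> j \<in> S \<and> k \<in> S \<and> i < j \<and> j < k \<and> Q i j k}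
        = (\<lambda>(i, j, k). {i, j, k}) ` T"
  proof (intro equalityI subsetI)
    fix e assume "e \<in> {{i, j, k} | i j k. i \<in> S \<and> j \<in> S \<and> k \<in> S \<and> i < j \<and> j < k \<and> Q i j k}"
    then obtain i j k where "e = {i, j, k}" "(i, j, k) \<in> T" by (auto simp: T_def P_def)
    then show "e \<in> (\<lambda>(i, j, k). {i, j, k}) ` T" by (simp add: rev_image_eqI)
  qed (auto simp: T_def P_def)
  then have "real (card {{i, j, k} | i j k. i \<in> S \<and> j \<in> S \<and> k \<in> S \<and> i < j \<and> j < k \<and> Q i j k})
        = (\<Sum>t\<in>S \<times> S \<times> S. of_bool (P t))"
    using card_image[OF inj] assms by (simp add: T_def Int_def)
  also have "\<dots> = sorted_triple_sum S (\<lambda>i j k. of_bool (Q i j k))"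
    unfolding sorted_triple_sum_def sum.cartesian_product P_def
    by (intro sum.cong refl) (auto split: prod.split simp: of_bool_conj)
  finally show ?thesis .
qed

lemma three_subsets_eq_sorted_triples:
  fixes S :: "'a::linorder set"
  shows "{A. A \<subseteq> S \<and> card A = 3} = {{i, j, k} | i j k. i \<in> S \<and> j \<in> S \<and> k \<in> S \<and> i < j \<and> j < k}"
proof (intro equalityI subsetI)
  fix A assume "A \<in> {A. A \<subseteq> S \<and> card A = 3}"
  then have A: "A \<subseteq> S" "card A = 3" "finite A" by (auto intro: card_ge_0_finite)
  then obtain xs where xs: "sorted_wrt (<) xs" "set xs = A" "length xs = 3"
    using finite_set_strict_sorted[OF A(3)] by auto
  then obtain i j k where "xs = [i, j, k]"
    by (auto simp: numeral_3_eq_3 length_Suc_conv)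
  then show "A \<in> {{i, j, k} | i j k. i \<in> S \<and> j \<in> S \<and> k \<in> S \<and> i < j \<and> j < k}"
    using xs A by auto
next
  fix A assume "A \<in> {{i, j, k} | i j k. i \<in> S \<and> j \<in> S \<and> k \<in> S \<and> i < j \<and> j < k}"
  then show "A \<in> {A. A \<subseteq> S \<and> card A = 3}"
    by (auto simp: card_insert_if)
qed

lemma sorted_triple_sum_one:
  fixes S :: "'a::linorder set"
  assumes "finite S"
  shows "sorted_triple_sum S (\<lambda>_ _ _. 1) = real (card S choose 3)"
  using card_sorted_triples[OF assms, of "\<lambda>_ _ _. True"]
  by (simp add: n_subsets[OF assms, symmetric] three_subsets_eq_sorted_triples)

lemma binomial_3_ge_cube:
  assumes "4 \<le> s"
  shows "real s ^ 3 / 24 \<le> real (s choose 3)"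
proof -
  have "real (s choose 3) * 6 = real s * (real s - 1) * (real s - 2)"
    using gbinomial_mult_fact'[of "real s" 3]
    by (simp add: binomial_gbinomial eval_nat_numeral)
  moreover have "real s ^ 3 / 4 \<le> real s * (real s - 1) * (real s - 2)"
  proof -
    have "0 \<le> real s * (real s - 4)"
      using assms by simp
    then have "real s ^ 2 / 4 \<le> (real s - 1) * (real s - 2)"
      by (simp add: algebra_simps power2_eq_square)
    from mult_left_mono[OF this, of "real s"] show ?thesis
      by (simp add: algebra_simps power2_eq_square power3_eq_cube)
  qed
  ultimately show ?thesis by simp
qed

lemma sum_pair_deviation_filter:
  fixes S :: "'a::linorder set"
  assumes "finite S"
  shows "(\<Sum>z\<in>S. pair_deviation p red {x\<in>S. P z x} {y\<in>S. Q z y})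
       = (\<Sum>z\<in>S. \<Sum>x\<in>S. \<Sum>y\<in>S. of_bool (P z x \<and> Q z y \<and> x < y) * (of_bool (red x y) - p))"
  using assms by (auto simp: pair_deviation_def sum.inter_filter of_bool_conj sum_distrib_left mult.assoc intro!: sum.cong)

lemma abs_sum_pair_deviation_le:
  fixes S :: "'a::linorder set"
  assumes "\<And>X Y. X \<subseteq> S \<Longrightarrow> Y \<subseteq> S \<Longrightarrow> \<bar>pair_deviation p red X Y\<bar> \<le> c"
  shows "\<bar>\<Sum>z\<in>S. pair_deviation p red {x\<in>S. P z x} {y\<in>S. Q z y}\<bar> \<le> real (card S) * c"
  using order.trans[OF sum_abs sum_bounded_above] assms by (metis (no_types, lifting) mem_Collect_eq subsetI)

lemma sorted_triple_sum_red_blue_blue_eq: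
  fixes S :: "'a::linorder set"
  assumes S: "finite S"
  shows "sorted_triple_sum S (\<lambda>i j k. of_bool (red i j) * of_bool (\<not> red j k) * of_bool (\<not> red i k))
    = p * (1 - p)\<^sup>2 * sorted_triple_sum S (\<lambda>_ _ _. 1)
      + (\<Sum>k\<in>S. pair_deviation p red {i\<in>S. i < k \<and> \<not> red i k} {j\<in>S. j < k \<and> \<not> red j k})
      - p * (\<Sum>i\<in>S. pair_deviation p red {j\<in>S. i < j} {k\<in>S. i < k \<and> \<not> red i k})
      - p * (1 - p) * (\<Sum>j\<in>S. pair_deviation p red {i\<in>S. i < j} {k\<in>S. j < k})"
proof -
  \<comment> \<open>Expanding \<open>red = p + f\<close> and \<open>b = 1 - red = (1 - p) - f\<close> in the edge indicator leaves
     \<open>p (1 - p)\<^sup>2\<close> plus three error terms, each of which is a sum of pair deviations.\<close>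
  define f where "f x y = of_bool (red x y) - p" for x y
  define b where "b x y = (of_bool (\<not> red x y) :: real)" for x y
  have identity: "of_bool (red i j) * b j k * b i k
        = p * (1 - p)\<^sup>2 * 1 + f i j * b j k * b i k - p * (f j k * b i k) - p * (1 - p) * f i k" for i j k
    by (simp add: f_def b_def power2_eq_square algebra_simps)
  have "sorted_triple_sum S (\<lambda>i j k. of_bool (red i j) * b j k * b i k)
      = p * (1 - p)\<^sup>2 * sorted_triple_sum S (\<lambda>_ _ _. 1)
        + sorted_triple_sum S (\<lambda>i j k. f i j * b j k * b i k)
        - p * sorted_triple_sum S (\<lambda>i j k. f j k * b i k) - p * (1 - p) * sorted_triple_sum S (\<lambda>i j k. f i k)"
    unfolding identity sorted_triple_sum_def
    by (simp add: algebra_simps sum.distrib sum_subtractf sum_distrib_left)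
  moreover have "sorted_triple_sum S (\<lambda>i j k. f i j * b j k * b i k)
      = (\<Sum>k\<in>S. pair_deviation p red {i\<in>S. i < k \<and> \<not> red i k} {j\<in>S. j < k \<and> \<not> red j k})"
  proof -
    have "sorted_triple_sum S (\<lambda>i j k. f i j * b j k * b i k)
        = (\<Sum>k\<in>S. \<Sum>i\<in>S. \<Sum>j\<in>S. of_bool (i < j \<and> j < k) * (f i j * b j k * b i k))"
      unfolding sorted_triple_sum_def by (subst sum.swap) (subst (2) sum.swap, rule refl)
    also have "\<dots> = (\<Sum>k\<in>S. \<Sum>i\<in>S. \<Sum>j\<in>S.
        of_bool ((i < k \<and> \<not> red i k) \<and> (j < k \<and> \<not> red j k) \<and> i < j) * (of_bool (red i j) - p))"
      by (intro sum.cong refl) (auto simp: f_def b_def)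
    finally show ?thesis by (simp add: sum_pair_deviation_filter[OF S])
  qed
  moreover have "sorted_triple_sum S (\<lambda>i j k. f j k * b i k)
      = (\<Sum>i\<in>S. pair_deviation p red {j\<in>S. i < j} {k\<in>S. i < k \<and> \<not> red i k})"
  proof -
    have "sorted_triple_sum S (\<lambda>i j k. f j k * b i k) = (\<Sum>i\<in>S. \<Sum>j\<in>S. \<Sum>k\<in>S.
        of_bool (i < j \<and> (i < k \<and> \<not> red i k) \<and> j < k) * (of_bool (red j k) - p))"
      unfolding sorted_triple_sum_def by (intro sum.cong refl) (auto simp: f_def b_def)
    then show ?thesis by (simp add: sum_pair_deviation_filter[OF S])
  qed
  moreover have "sorted_triple_sum S (\<lambda>i j k. f i k)
      = (\<Sum>j\<in>S. pair_deviation p red {i\<in>S. i < j} {k\<in>S. j < k})"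
  proof -
    have "sorted_triple_sum S (\<lambda>i j k. f i k) = (\<Sum>j\<in>S. \<Sum>i\<in>S. \<Sum>k\<in>S. of_bool (i < j \<and> j < k) * f i k)"
      unfolding sorted_triple_sum_def by (rule sum.swap)
    also have "\<dots> = (\<Sum>j\<in>S. \<Sum>i\<in>S. \<Sum>k\<in>S. of_bool (i < j \<and> j < k \<and> i < k) * (of_bool (red i k) - p))"
      by (intro sum.cong refl) (auto simp: f_def)
    finally show ?thesis by (simp add: sum_pair_deviation_filter[OF S])
  qed
  ultimately show ?thesis
    unfolding b_def by simp
qed

lemma sorted_triple_sum_red_blue_blue_ge:
  fixes S :: "'a::linorder set" and p c :: real
  assumes S: "finite S" and p: "0 \<le> p" "p \<le> 1"
    and dev: "\<And>X Y. X \<subseteq> S \<Longrightarrow> Y \<subseteq> S \<Longrightarrow> \<bar>pair_deviation p red X Y\<bar> \<le> c"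
  shows "p * (1 - p)\<^sup>2 * sorted_triple_sum S (\<lambda>_ _ _. 1) - 3 * real (card S) * c
         \<le> sorted_triple_sum S (\<lambda>i j k. of_bool (red i j) * of_bool (\<not> red j k) * of_bool (\<not> red i k))"
proof -
  have scaled: "q * T \<le> real (card S) * c" if "0 \<le> q" "q \<le> 1" "\<bar>T\<bar> \<le> real (card S) * c" for q T
    using mult_left_mono[OF abs_ge_self[of T] that(1)] mult_left_le_one_le[OF abs_ge_zero[of T] that(1,2)] that(3)
    by linarith
  have "- (\<Sum>k\<in>S. pair_deviation p red {i\<in>S. i < k \<and> \<not> red i k} {j\<in>S. j < k \<and> \<not> red j k})
      \<le> real (card S) * c"
    using abs_sum_pair_deviation_le[OF dev] by (simp add: abs_le_iff)
  moreover have "p * (\<Sum>i\<in>S. pair_deviation p red {j\<in>S. i < j} {k\<in>S. i < k \<and> \<not> red i k})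
      \<le> real (card S) * c"
    using p abs_sum_pair_deviation_le[OF dev] by (intro scaled) auto
  moreover have "p * (1 - p) * (\<Sum>j\<in>S. pair_deviation p red {i\<in>S. i < j} {k\<in>S. j < k})
      \<le> real (card S) * c"
    using p abs_sum_pair_deviation_le[OF dev] by (intro scaled mult_le_one) auto
  ultimately show ?thesis
    unfolding sorted_triple_sum_red_blue_blue_eq[OF S, of red p] by linarith
qed

definition red_blue_blue_triples :: "nat \<Rightarrow> (nat \<Rightarrow> nat \<Rightarrow> bool) \<Rightarrow> nat set set" where
  "red_blue_blue_triples n red =
     {{i, j, k} | i j k. i < j \<and> j < k \<and> k < n \<and> red i j \<and> \<not> red j k \<and> \<not> red i k}"

lemma card_red_blue_blue_triples_within:
  assumes "S \<subseteq> {..<n}"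
  shows "real (card {e \<in> red_blue_blue_triples n red. e \<subseteq> S})
         = sorted_triple_sum S (\<lambda>i j k. of_bool (red i j) * of_bool (\<not> red j k) * of_bool (\<not> red i k))"
proof -
  have "{e \<in> red_blue_blue_triples n red. e \<subseteq> S}
      = {{i, j, k} | i j k. i \<in> S \<and> j \<in> S \<and> k \<in> S \<and> i < j \<and> j < k \<and> (red i j \<and> \<not> red j k \<and> \<not> red i k)}"
    using assms unfolding red_blue_blue_triples_def by blast
  then show ?thesis
    using card_sorted_triples[OF finite_subset[OF assms finite_lessThan]]
    by (simp add: of_bool_conj mult.assoc)
qed

lemma edge_density_red_blue_blue_triples_ge:
  assumes S: "S \<subseteq> {..<n}" "4 \<le> card S" and p: "0 \<le> p" "p \<le> 1"
    and dev: "\<And>X Y. X \<subseteq> S \<Longrightarrow> Y \<subseteq> S \<Longrightarrow> \<bar>pair_deviation p red X Y\<bar> \<le> c"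
  shows "p * (1 - p)\<^sup>2 - 72 * c / real (card S) ^ 2 \<le> edge_density (red_blue_blue_triples n red) S"
proof -
  define s where "s = real (card S)"
  define N where "N = real (card S choose 3)"
  have fin: "finite S" using S(1) finite_subset by blast
  have c: "0 \<le> c" using dev[of "{}" "{}"] by (simp add: pair_deviation_def)
  have s: "4 \<le> s" using S(2) unfolding s_def by simp
  have N: "s ^ 3 / 24 \<le> N" unfolding s_def N_def by (rule binomial_3_ge_cube[OF S(2)])
  moreover have "0 < s ^ 3 / 24" using s by simp
  ultimately have "0 < N" by linarith
  have "p * (1 - p)\<^sup>2 * N - 3 * s * c \<le> real (card {e \<in> red_blue_blue_triples n red. e \<subseteq> S})"
    using sorted_triple_sum_red_blue_blue_ge[OF fin p dev] card_red_blue_blue_triples_within[OF S(1)]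
      sorted_triple_sum_one[OF fin] unfolding s_def N_def by simp
  from divide_right_mono[OF this, of N] \<open>0 < N\<close>
  have "p * (1 - p)\<^sup>2 - 3 * s * c / N \<le> edge_density (red_blue_blue_triples n red) S"
    unfolding edge_density_def N_def by (simp add: diff_divide_distrib)
  moreover have "3 * s * c / N \<le> 72 * c / s\<^sup>2"
  proof -
    have "3 * s * c / N \<le> 3 * s * c / (s ^ 3 / 24)"
      using N s c \<open>0 < N\<close> by (intro divide_left_mono) auto
    also have "\<dots> = 72 * c / s\<^sup>2"
      using s by (simp add: field_simps power2_eq_square power3_eq_cube)
    finally show ?thesis .
  qed
  ultimately show ?thesis unfolding s_def by linarith
qed

lemma red_blue_blue_triple_distinct:
  assumes "{x, y, z} \<in> red_blue_blue_triples n red"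
  shows "x \<noteq> y" "y \<noteq> z" "x \<noteq> z"
proof -
  obtain i j k where "{x, y, z} = {i, j, k}" "i < j" "j < k"
    using assms unfolding red_blue_blue_triples_def by blast
  then have "card {x, y, z} = 3"
    by simp
  then show "x \<noteq> y" "y \<noteq> z" "x \<noteq> z"
    by (auto simp: card_insert_if split: if_splits)
qed

lemma red_blue_blue_triple_red_pair_iff:
  assumes "{x, y, z} \<in> red_blue_blue_triples n red"
  shows "red (min x y) (max x y) \<longleftrightarrow> max x y < z"
proof -
  obtain i j k where e: "{x, y, z} = {i, j, k}" "i < j" "j < k" "red i j" "\<not> red j k" "\<not> red i k"
    using assms unfolding red_blue_blue_triples_def by blast
  have "x \<in> {i, j, k}" "y \<in> {i, j, k}" "z \<in> {i, j, k}"
    using e(1) by blast+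
  then consider "z = k" "x \<in> {i, j}" "y \<in> {i, j}" | "z = i" "x \<in> {j, k}" "y \<in> {j, k}"
    | "z = j" "x \<in> {i, k}" "y \<in> {i, k}"
    using red_blue_blue_triple_distinct[OF assms] by blast
  then show ?thesis
    by cases (use e(2-6) red_blue_blue_triple_distinct[OF assms] in \<open>auto simp: min_def max_def\<close>)
qed

lemma three_dvd_of_period:
  fixes s :: "nat \<Rightarrow> nat"
  assumes step: "\<And>t. (s (Suc t) + 1) mod 3 = s t mod 3" and period: "s l = s 0"
  shows "3 dvd l"
proof -
  have "(s t + t) mod 3 = s 0 mod 3" for t
  proof (induction t)
    case (Suc t)
    have "(s (Suc t) + Suc t) mod 3 = ((s (Suc t) + 1) mod 3 + t) mod 3"
      by (simp add: mod_add_left_eq)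
    also have "\<dots> = (s t + t) mod 3"
      by (simp only: step mod_add_left_eq)
    finally show ?case using Suc.IH by simp
  qed simp
  then have "(s 0 + l) mod 3 = s 0 mod 3"
    using period by metis
  moreover have "(a + l) mod 3 = a mod 3 \<Longrightarrow> 3 dvd l" for a :: nat
    by presburger
  ultimately show ?thesis by blast
qed

lemma max_position_step:
  fixes A B C D :: "'a::linorder"
  assumes "max B C < A \<longleftrightarrow> max B C < D" "A \<noteq> B" "B \<noteq> C" "A \<noteq> C" "B \<noteq> D" "C \<noteq> D"
  shows "((if max C D < B then 0 else if D < C then 1 else 2) + 1) mod 3
         = (if max B C < A then 0 else if C < B then 1 else 2 :: nat) mod 3"
  using assms by (auto simp: max_def)

lemma three_dvd_period_of_red_blue_blue_tight_walk:
  fixes a :: "nat \<Rightarrow> nat"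
  assumes edge: "\<And>t. {a t, a (t + 1), a (t + 2)} \<in> red_blue_blue_triples n red"
    and periodic: "\<And>t. a (l + t) = a t"
  shows "3 dvd l"
proof -
  \<comment> \<open>the position of the largest vertex in the window \<open>a t, a (t + 1), a (t + 2)\<close>\<close>
  define s where "s t = (if max (a (t + 1)) (a (t + 2)) < a t then 0
                         else if a (t + 2) < a (t + 1) then 1 else 2 :: nat)" for t
  have "(s (Suc t) + 1) mod 3 = s t mod 3" for t
  proof -
    have shift: "t + 1 + 1 = t + 2" "t + 1 + 2 = t + 3" "Suc t = t + 1"
      by simp_all
    have first: "{a (t + 1), a (t + 2), a t} \<in> red_blue_blue_triples n red"
      using edge[of t] by (simp only: insert_commute)
    have second: "{a (t + 1), a (t + 2), a (t + 3)} \<in> red_blue_blue_triples n red"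
      using edge[of "t + 1"] unfolding shift .
    have "max (a (t + 1)) (a (t + 2)) < a t \<longleftrightarrow> max (a (t + 1)) (a (t + 2)) < a (t + 3)"
      using red_blue_blue_triple_red_pair_iff[OF first] red_blue_blue_triple_red_pair_iff[OF second]
      by blast
    then show ?thesis
      unfolding s_def shift
      using red_blue_blue_triple_distinct[OF first] red_blue_blue_triple_distinct[OF second]
      by (intro max_position_step) auto
  qed
  moreover have "s l = s 0"
  proof -
    have "s (l + 0) = s 0"
      unfolding s_def add.assoc periodic ..
    then show ?thesis by simp
  qed
  ultimately show ?thesis
    by (rule three_dvd_of_period)
qed

lemma red_blue_blue_triples_tight_cycle_free:
  assumes "\<not> 3 dvd l"
  shows "free_of {..<l} (tight_cycle_edges l) {..<n} (red_blue_blue_triples n red)"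
  unfolding free_of_def contains_copy_def
proof
  assume "\<exists>f. inj_on f {..<l} \<and> f ` {..<l} \<subseteq> {..<n} \<and>
    (\<forall>e\<in>tight_cycle_edges l. f ` e \<in> red_blue_blue_triples n red)"
  then obtain f where copy: "\<forall>e\<in>tight_cycle_edges l. f ` e \<in> red_blue_blue_triples n red"
    by blast
  have "0 < l"
    using assms by (rule contrapos_np) simp
  have "3 dvd l"
  proof (rule three_dvd_period_of_red_blue_blue_tight_walk)
    fix t
    have "{t mod l, (t mod l + 1) mod l, (t mod l + 2) mod l} \<in> tight_cycle_edges l"
      unfolding tight_cycle_edges_def using \<open>0 < l\<close> by auto
    then have "f ` {t mod l, (t mod l + 1) mod l, (t mod l + 2) mod l} \<in> red_blue_blue_triples n red"
      using copy by blast
    then show "{f (t mod l), f ((t + 1) mod l), f ((t + 2) mod l)} \<in> red_blue_blue_triples n red"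
      by (simp only: mod_add_left_eq image_insert image_empty)
    show "f ((l + t) mod l) = f (t mod l)"
      by simp
  qed
  with assms show False ..
qed

lemma linear_density_geI:
  assumes "finite V" "d \<le> 1"
    and "\<And>S. S \<subseteq> V \<Longrightarrow> eps * real (card V) \<le> real (card S) \<Longrightarrow> d \<le> edge_density E S"
  shows "d \<le> linear_density eps V E"
proof -
  define D where "D = {edge_density E S | S. S \<subseteq> V \<and> real (card S) \<ge> eps * real (card V)}"
  have "D \<subseteq> edge_density E ` Pow V"
    by (auto simp: D_def)
  then have "finite D"
    by (rule finite_subset) (simp add: \<open>finite V\<close>)
  moreover have "\<forall>x\<in>D. d \<le> x"
    using assms(3) by (auto simp: D_def)
  ultimately show ?thesis
    using \<open>d \<le> 1\<close> unfolding linear_density_def D_def[symmetric] by (simp add: Min_ge_iff)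
qed

lemma uniform_turan_density_geI:
  fixes VF :: "'b set" and EF :: "'b set set" and c :: real
  assumes "0 < c" "c \<le> 1"
    and "\<And>d eps. 0 < d \<Longrightarrow> d < c \<Longrightarrow> 0 < eps \<Longrightarrow>
          \<forall>\<^sub>F n in sequentially. \<exists>E::nat set set.
            hypergraph3 {..<n} E \<and> free_of VF EF {..<n} E \<and> d \<le> linear_density eps {..<n} E"
  shows "c \<le> uniform_turan_density VF EF"
proof -
  define A where "A = {d. 0 \<le> d \<and> d \<le> 1 \<and>
        (\<forall>eps>0. \<forall>N. \<exists>n\<ge>N. \<exists>E::nat set set.
            hypergraph3 {..<n} E \<and> free_of VF EF {..<n} E \<and>
            linear_density eps {..<n} E \<ge> d)}"
  have "bdd_above A"
    unfolding A_def bdd_above_def by auto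
  have "d \<in> A" if "0 < d" "d < c" for d
  proof -
    have "\<exists>n\<ge>N. \<exists>E::nat set set. hypergraph3 {..<n} E \<and> free_of VF EF {..<n} E \<and>
            d \<le> linear_density eps {..<n} E" if "0 < eps" for eps N
      using assms(3)[OF \<open>0 < d\<close> \<open>d < c\<close> that] unfolding eventually_sequentially
      by (metis max.cobounded1 max.cobounded2)
    then show ?thesis
      using that assms(2) unfolding A_def by auto
  qed
  then have "c \<le> Sup A"
    using cSup_upper[OF _ \<open>bdd_above A\<close>] by (intro dense_le_bounded[OF \<open>0 < c\<close>]) auto
  then show ?thesis
    unfolding uniform_turan_density_def A_def .
qed

lemma linear_density_red_blue_blue_triples_ge:
  fixes eps p \<gamma> :: real
  assumes "0 < eps" "4 \<le> eps * real n" "0 \<le> p" "p \<le> 1"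
    and dev: "\<And>X Y. X \<subseteq> {..<n} \<Longrightarrow> Y \<subseteq> {..<n} \<Longrightarrow> \<bar>pair_deviation p red X Y\<bar> \<le> \<gamma> * real n ^ 2"
  shows "p * (1 - p)\<^sup>2 - 72 * \<gamma> / eps\<^sup>2 \<le> linear_density eps {..<n} (red_blue_blue_triples n red)"
proof -
  have "0 \<le> \<gamma> * real n ^ 2"
    using dev[of "{}" "{}"] by (simp add: pair_deviation_def)
  then have "0 \<le> \<gamma>"
    using assms(1,2) by (auto simp: zero_le_mult_iff)
  have "p * (1 - p)\<^sup>2 \<le> 1"
    using assms(3,4) by (intro mult_le_one) (auto simp: power_le_one)
  moreover have "0 \<le> 72 * \<gamma> / eps\<^sup>2"
    using \<open>0 \<le> \<gamma>\<close> by simp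
  ultimately have "p * (1 - p)\<^sup>2 - 72 * \<gamma> / eps\<^sup>2 \<le> 1"
    by linarith
  then show ?thesis
  proof (rule linear_density_geI[OF finite_lessThan])
    fix S assume S: "S \<subseteq> {..<n}" "eps * real (card {..<n}) \<le> real (card S)"
    then have "eps * real n \<le> real (card S)" by simp
    then have "4 \<le> card S" using assms(2) by linarith
    have "p * (1 - p)\<^sup>2 - 72 * (\<gamma> * real n ^ 2) / real (card S) ^ 2
        \<le> edge_density (red_blue_blue_triples n red) S"
      using S(1) dev by (intro edge_density_red_blue_blue_triples_ge[OF S(1) \<open>4 \<le> card S\<close> assms(3,4)]) blast
    moreover have "72 * (\<gamma> * real n ^ 2) / real (card S) ^ 2 \<le> 72 * \<gamma> / eps\<^sup>2"
    proof -
      have "(eps * real n) ^ 2 \<le> real (card S) ^ 2"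
        using \<open>eps * real n \<le> real (card S)\<close> \<open>0 < eps\<close> by (intro power_mono) auto
      then have "real n ^ 2 / real (card S) ^ 2 \<le> 1 / eps\<^sup>2"
        using \<open>4 \<le> card S\<close> \<open>0 < eps\<close> by (simp add: field_simps power_mult_distrib)
      from mult_left_mono[OF this, of "72 * \<gamma>"] \<open>0 \<le> \<gamma>\<close> show ?thesis
        by simp
    qed
    ultimately show "p * (1 - p)\<^sup>2 - 72 * \<gamma> / eps\<^sup>2 \<le> edge_density (red_blue_blue_triples n red) S"
      by linarith
  qed
qed

lemma eventually_tight_cycle_free_dense_hypergraph:
  fixes d eps :: real
  assumes "\<not> 3 dvd l" "d < 4 / 27" "0 < eps"
  shows "\<forall>\<^sub>F n in sequentially. \<exists>E::nat set set.
           hypergraph3 {..<n} E \<and> free_of {..<l} (tight_cycle_edges l) {..<n} E \<and>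
           d \<le> linear_density eps {..<n} E"
proof -
  define \<gamma> where "\<gamma> = (4 / 27 - d) * eps\<^sup>2 / 72"
  have "0 < \<gamma>"
    using assms(2,3) unfolding \<gamma>_def by simp
  have "\<forall>\<^sub>F n in sequentially. 4 \<le> eps * real n"
    using \<open>0 < eps\<close> by real_asymp
  moreover have "\<forall>\<^sub>F n in sequentially.
      \<exists>red. \<forall>X\<subseteq>{..<n}. \<forall>Y\<subseteq>{..<n}. \<bar>pair_deviation (1 / 3) red X Y\<bar> < \<gamma> * real n ^ 2"
    using \<open>0 < \<gamma>\<close> by (intro eventually_exists_colouring_with_small_pair_deviations) auto
  ultimately show ?thesis
  proof eventually_elim
    case (elim n)
    then obtain red where
      "\<And>X Y. X \<subseteq> {..<n} \<Longrightarrow> Y \<subseteq> {..<n} \<Longrightarrow> \<bar>pair_deviation (1 / 3) red X Y\<bar> \<le> \<gamma> * real n ^ 2"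
      by (meson less_imp_le)
    from linear_density_red_blue_blue_triples_ge[OF \<open>0 < eps\<close> elim(1) _ _ this]
    have "d \<le> linear_density eps {..<n} (red_blue_blue_triples n red)"
      using \<open>0 < eps\<close> by (simp add: \<gamma>_def power2_eq_square)
    moreover have "hypergraph3 {..<n} (red_blue_blue_triples n red)"
      unfolding hypergraph3_def red_blue_blue_triples_def by auto
    ultimately show ?case
      using red_blue_blue_triples_tight_cycle_free[OF assms(1)] by blast
  qed
qed

theorem proposition2p4:
  fixes l :: nat
  assumes "l \<ge> 5" and "\<not> 3 dvd l"
  shows "4 / 27 \<le> uniform_turan_density {..<l} (tight_cycle_edges l)"
proof (rule uniform_turan_density_geI)
  fix d eps :: real
  assume "0 < d" "d < 4 / 27" "0 < eps"
  then show "\<forall>\<^sub>F n in sequentially. \<exists>E::nat set set. hypergraph3 {..<n} E \<and>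
      free_of {..<l} (tight_cycle_edges l) {..<n} E \<and> d \<le> linear_density eps {..<n} E"
    using assms(2) by (intro eventually_tight_cycle_free_dense_hypergraph) auto
qed simp_all

end
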